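(* Let $M$ be a matroid on $S$ and $N$ a matroid on $T$, with $S\cap T=\emptyset$, let $P=M\mathbin{\Box} N$, and let $U\subseteq S\cup T$. Then $$P|U = M|(U\cap S)\ \mathbin{\Box}\ \mathrm{L}^i\big(N|(U\cap T)\big)\qquad\text{and}\qquad P/U=\mathrm{T}^j\big(M/(U\cap S)\big)\ \mathbin{\Box}\ N/(U\cap T),$$ where $i=\lambda_M(U\cap S)$ and $j=\nu_N(U\cap T)$.
   Context: For a matroid $M$ on $S$ write $\rho_M$ for rank, $\rho(M)=\rho_M(S)$, $\nu_M(A)=|A|-\rho_M(A)$, $\lambda_M(A)=\rho(M)-\rho_M(A)$. For matroids $M$ on $S$ and $N$ on $T$ with $S\cap T=\emptyset$, the free product $M\mathbin{\Box} N$ is the matroid on $S\cup T$ whose independent sets are those $A$ with $A\cap S$ independent in $M$ and $\lambda_M(A\cap S)\geq\nu_N(A\cap T)$. The truncation $\mathrm{T}M$ of $M$ is the matroid whose independent sets are the independent sets $A$ of $M$ with $|A|\leq\max\{0,\rho(M)-1\}$; the (Higgs) lift $\mathrm{L}M$ is the matroid whose independent sets are the $A\subseteq S$ with $\nu_M(A)\leq 1$. $\mathrm{T}^i$ and $\mathrm{L}^i$ denote $i$-fold iterates ($\mathrm{T}^0=\mathrm{L}^0=$ identity). $|$ denotes restriction and $/$ contraction. *)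

theory Defs
  imports Main
begin

record 'a matroid =
  ground :: "'a set"
  indep :: "'a set \<Rightarrow> bool"

definition matroid :: "'a matroid \<Rightarrow> bool" where
  "matroid M \<longleftrightarrow>
     finite (ground M) \<and>
     indep M {} \<and>
     (\<forall>A. indep M A \<longrightarrow> A \<subseteq> ground M) \<and>
     (\<forall>A B. indep M A \<and> B \<subseteq> A \<longrightarrow> indep M B) \<and>
     (\<forall>A B. indep M A \<and> indep M B \<and> card A < card B \<longrightarrow>
        (\<exists>x \<in> B - A. indep M (insert x A)))"

definition rank :: "'a matroid \<Rightarrow> 'a set \<Rightarrow> nat" where
  "rank M A = Max {card B | B. B \<subseteq> A \<and> indep M B}"

definition mrank :: "'a matroid \<Rightarrow> nat" where
  "mrank M = rank M (ground M)"

definition nullity :: "'a matroid \<Rightarrow> 'a set \<Rightarrow> nat" where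
  "nullity M A = card A - rank M A"

text \<open>\<lambda>_M(A) = \<rho>(M) - \<rho>_M(A)\<close>
definition corank :: "'a matroid \<Rightarrow> 'a set \<Rightarrow> nat" where
  "corank M A = mrank M - rank M A"

definition free_product :: "'a matroid \<Rightarrow> 'a matroid \<Rightarrow> 'a matroid" where
  "free_product M N =
     \<lparr> ground = ground M \<union> ground N,
       indep = (\<lambda>A. A \<subseteq> ground M \<union> ground N \<and> indep M (A \<inter> ground M) \<and>
                     corank M (A \<inter> ground M) \<ge> nullity N (A \<inter> ground N)) \<rparr>"

definition restrict :: "'a matroid \<Rightarrow> 'a set \<Rightarrow> 'a matroid" where
  "restrict M X = \<lparr> ground = X, indep = (\<lambda>A. A \<subseteq> X \<and> indep M A) \<rparr>"

definition contract :: "'a matroid \<Rightarrow> 'a set \<Rightarrow> 'a matroid" where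
  "contract M X = \<lparr> ground = ground M - X,
     indep = (\<lambda>A. A \<subseteq> ground M - X \<and> rank M (A \<union> X) = card A + rank M X) \<rparr>"

definition trunc :: "'a matroid \<Rightarrow> 'a matroid" where
  "trunc M = \<lparr> ground = ground M,
     indep = (\<lambda>A. indep M A \<and> int (card A) \<le> max 0 (int (mrank M) - 1)) \<rparr>"

definition lift :: "'a matroid \<Rightarrow> 'a matroid" where
  "lift M = \<lparr> ground = ground M,
     indep = (\<lambda>A. A \<subseteq> ground M \<and> nullity M A \<le> 1) \<rparr>"

end

theory Submission
  imports Defs
begin

text \<open>Inside \<open>U\<close>, the free-product
  condition \<open>\<nu>\<^sub>N(A \<inter> T) \<le> \<lambda>\<^sub>M(A \<inter> S)\<close> and the one for \<open>M|(U \<inter> S)\<close> differ by the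
  constant \<open>i = \<lambda>\<^sub>M(U \<inter> S)\<close>, which is exactly what \<open>i\<close> lifts subtract from the nullity.
  Independence in \<open>P/U\<close> is a rank condition; the free product has rank
  \<open>\<rho>\<^sub>P(X \<union> Y) = min (\<rho>\<^sub>M(X) + |Y|) (\<rho>(M) + \<rho>\<^sub>N(Y))\<close>, contraction subtracts
  \<open>\<rho>(X)\<close> from ranks and \<open>j\<close> truncations cap cardinalities at \<open>\<rho> - j\<close>, so both sides
  reduce to the same arithmetic condition.\<close>

section \<open>Independence systems and rank\<close>

locale indep_system =
  fixes K :: "'a matroid"
  assumes finite_ground: "finite (ground K)"
    and indep_empty: "indep K {}"
    and indep_subset_ground: "indep K A \<Longrightarrow> A \<subseteq> ground K"
    and indep_subset: "indep K A \<Longrightarrow> B \<subseteq> A \<Longrightarrow> indep K B"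

lemma indep_system_matroid: "matroid M \<Longrightarrow> indep_system M"
  unfolding matroid_def indep_system_def by (elim conjE) (intro conjI; assumption | blast)

lemma rank_indep:
  assumes "finite B" "indep K B" shows "rank K B = card B"
proof -
  have "finite {card C | C. C \<subseteq> B \<and> indep K C}"
    by (rule finite_subset[of _ "card ` Pow B"]) (use assms in auto)
  then show ?thesis
    unfolding rank_def by (rule Max_eqI) (use assms in \<open>auto intro: card_mono\<close>)
qed

context indep_system
begin

lemma finite_indep: "indep K B \<Longrightarrow> finite B"
  using finite_ground indep_subset_ground finite_subset by blast

lemma finite_rank_set: "finite {card B | B. B \<subseteq> Z \<and> indep K B}"
proof (rule finite_subset)
  show "{card B | B. B \<subseteq> Z \<and> indep K B} \<subseteq> card ` Pow (ground K)"
    using indep_subset_ground by auto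
qed (simp add: finite_ground)

lemma card_le_rank: "indep K B \<Longrightarrow> B \<subseteq> Z \<Longrightarrow> card B \<le> rank K Z"
  unfolding rank_def by (rule Max_ge[OF finite_rank_set]) blast

lemma obtain_rank_indep:
  obtains B where "B \<subseteq> Z" "indep K B" "card B = rank K Z"
proof -
  have "card {} \<in> {card B | B. B \<subseteq> Z \<and> indep K B}"
    using indep_empty by (intro CollectI exI[of _ "{}"]) simp
  then have "{card B | B. B \<subseteq> Z \<and> indep K B} \<noteq> {}" by blast
  then have "rank K Z \<in> {card B | B. B \<subseteq> Z \<and> indep K B}"
    unfolding rank_def by (rule Max_in[OF finite_rank_set])
  then show thesis using that by auto
qed

lemma rank_le_card: "finite Z \<Longrightarrow> rank K Z \<le> card Z"
  by (rule obtain_rank_indep[of Z]) (metis card_mono)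

lemma rank_mono: "Y \<subseteq> Z \<Longrightarrow> rank K Y \<le> rank K Z"
  by (rule obtain_rank_indep[of Y]) (use card_le_rank in fastforce)

lemma rank_le_mrank: "rank K Z \<le> mrank K"
  unfolding mrank_def
  by (rule obtain_rank_indep[of Z]) (use card_le_rank indep_subset_ground in fastforce)

lemma rank_Un_le: "finite B \<Longrightarrow> rank K (B \<union> X) \<le> card B + rank K X"
proof -
  assume "finite B"
  obtain I where I: "I \<subseteq> B \<union> X" "indep K I" "card I = rank K (B \<union> X)"
    by (rule obtain_rank_indep)
  have "card I \<le> card (I \<inter> X) + card (I - X)"
    using card_Un_le[of "I \<inter> X" "I - X"] by (simp add: Int_Diff_Un)
  moreover have "card (I \<inter> X) \<le> rank K X"
    using I(2) by (intro card_le_rank) (auto intro: indep_subset)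
  moreover have "card (I - X) \<le> card B"
    using I(1) \<open>finite B\<close> by (intro card_mono) auto
  ultimately show ?thesis using I(3) by linarith
qed

lemma obtain_indep_card:
  assumes "k \<le> rank K Z"
  obtains B where "B \<subseteq> Z" "indep K B" "card B = k"
proof -
  obtain I where I: "I \<subseteq> Z" "indep K I" "card I = rank K Z"
    by (rule obtain_rank_indep)
  obtain B where "B \<subseteq> I" "card B = k"
    using assms I(3) by (metis obtain_subset_with_card_n)
  with I show thesis by (intro that[of B]) (auto intro: indep_subset)
qed

lemma obtain_subset_nullity_le:
  assumes "Y \<subseteq> ground K"
  obtains I where "I \<subseteq> Y" "card I = min (card Y) (rank K Y + k)" "nullity K I \<le> k"
proof -
  have fY: "finite Y" using assms finite_ground finite_subset by blast
  obtain B where B: "B \<subseteq> Y" "indep K B" "card B = rank K Y"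
    by (rule obtain_rank_indep)
  have fB: "finite B" using fY B(1) finite_subset by blast
  have "card (Y - B) = card Y - rank K Y" using B fB by (simp add: card_Diff_subset)
  then obtain C where C: "C \<subseteq> Y - B" "card C = min k (card Y - rank K Y)"
    by (metis min.cobounded2 obtain_subset_with_card_n)
  have cBC: "card (B \<union> C) = card B + card C"
    using C(1) fB fY by (intro card_Un_disjoint) (auto intro: finite_subset)
  have "card B \<le> rank K (B \<union> C)" using B(2) by (rule card_le_rank) blast
  then have "nullity K (B \<union> C) \<le> k" unfolding nullity_def using cBC C(2) by linarith
  moreover have "B \<union> C \<subseteq> Y" using B(1) C(1) by blast
  moreover have "card (B \<union> C) = min (card Y) (rank K Y + k)"
    using cBC C(2) B(3) rank_le_card[OF fY] by linarith
  ultimately show thesis by (intro that)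
qed

end

lemma matroid_augment_to_rank:
  assumes "matroid M" "indep M I" "I \<subseteq> W"
  shows "\<exists>J. I \<subseteq> J \<and> J \<subseteq> W \<and> indep M J \<and> card J = rank M W"
  using assms(2,3)
proof (induction "rank M W - card I" arbitrary: I rule: less_induct)
  case less
  interpret indep_system M using assms(1) by (rule indep_system_matroid)
  have le: "card I \<le> rank M W" using less(2,3) by (rule card_le_rank)
  show ?case
  proof (cases "card I = rank M W")
    case False
    obtain B where B: "B \<subseteq> W" "indep M B" "card B = rank M W"
      by (rule obtain_rank_indep)
    then obtain x where x: "x \<in> B - I" "indep M (insert x I)"
      using assms(1) less(2) False le unfolding matroid_def by (metis le_neq_implies_less)
    have "card (insert x I) = Suc (card I)"
      using x finite_indep[OF less(2)] by simp
    moreover have "insert x I \<subseteq> W" using x B(1) less(3) by blast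
    ultimately obtain J where "insert x I \<subseteq> J" "J \<subseteq> W" "indep M J" "card J = rank M W"
      using less(1)[of "insert x I"] x(2) False le by fastforce
    then show ?thesis by blast
  qed (use less in blast)
qed

section \<open>Restriction, lift and truncation\<close>

lemma ground_restrict [simp]: "ground (restrict M X) = X"
  by (simp add: restrict_def)

lemma indep_restrict: "indep (restrict M X) A \<longleftrightarrow> A \<subseteq> X \<and> indep M A"
  by (simp add: restrict_def)

lemma rank_restrict: "Y \<subseteq> X \<Longrightarrow> rank (restrict M X) Y = rank M Y"
  unfolding rank_def indep_restrict by (metis (lifting) order_trans)

lemma mrank_restrict: "mrank (restrict M X) = rank M X"
  by (simp add: mrank_def rank_restrict)

lemma nullity_restrict: "Y \<subseteq> X \<Longrightarrow> nullity (restrict M X) Y = nullity M Y"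
  by (simp add: nullity_def rank_restrict)

lemma (in indep_system) indep_system_restrict:
  "X \<subseteq> ground K \<Longrightarrow> indep_system (restrict K X)"
  by unfold_locales
    (auto simp: indep_restrict indep_empty intro: finite_subset[OF _ finite_ground] indep_subset)

lemma ground_lift [simp]: "ground (lift K) = ground K"
  by (simp add: lift_def)

lemma indep_lift: "indep (lift K) A \<longleftrightarrow> A \<subseteq> ground K \<and> nullity K A \<le> 1"
  by (simp add: lift_def)

lemma ground_trunc [simp]: "ground (trunc K) = ground K"
  by (simp add: trunc_def)

lemma indep_trunc: "indep (trunc K) A \<longleftrightarrow> indep K A \<and> card A \<le> mrank K - 1"
  by (auto simp: trunc_def)

lemma indep_system_funpow:
  fixes f :: "'a matroid \<Rightarrow> 'a matroid"
  assumes "\<And>K. indep_system K \<Longrightarrow> indep_system (f K)" "indep_system K"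
  shows "indep_system ((f ^^ n) K)"
  by (induction n) (simp_all add: assms)

context indep_system
begin

lemma nullity_mono:
  assumes "A \<subseteq> B" "B \<subseteq> ground K"
  shows "nullity K A \<le> nullity K B"
proof -
  have fB: "finite B" using assms(2) finite_ground finite_subset by blast
  have fA: "finite A" using assms(1) fB finite_subset by blast
  have "rank K B \<le> card (B - A) + rank K A"
    using rank_Un_le[of "B - A" A] fB assms(1) by (simp add: Un_absorb2)
  moreover have "card B = card (B - A) + card A"
    using card_Diff_subset[OF fA assms(1)] card_mono[OF fB assms(1)] by simp
  moreover have "rank K A \<le> card A" using rank_le_card[OF fA] .
  ultimately show ?thesis unfolding nullity_def by linarith
qed

lemma indep_system_lift: "indep_system (lift K)"
proof
  show "indep (lift K) {}" by (simp add: indep_lift nullity_def)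
next
  fix A B assume "indep (lift K) A" "B \<subseteq> A"
  then show "indep (lift K) B"
    using nullity_mono[of B A] by (auto simp: indep_lift)
qed (simp_all add: finite_ground indep_lift)

lemma rank_lift:
  assumes "A \<subseteq> ground K"
  shows "rank (lift K) A = min (card A) (rank K A + 1)"
proof (rule antisym)
  interpret L: indep_system "lift K" by (rule indep_system_lift)
  have fA: "finite A" using assms finite_ground finite_subset by blast
  obtain B where B: "B \<subseteq> A" "indep (lift K) B" "card B = rank (lift K) A"
    by (rule L.obtain_rank_indep)
  have "card B \<le> rank K B + 1" using B(2) unfolding indep_lift nullity_def by linarith
  moreover have "rank K B \<le> rank K A" using B(1) by (rule rank_mono)
  moreover have "card B \<le> card A" using fA B(1) by (rule card_mono)
  ultimately show "rank (lift K) A \<le> min (card A) (rank K A + 1)" using B(3) by simp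
next
  interpret L: indep_system "lift K" by (rule indep_system_lift)
  obtain I where "I \<subseteq> A" "card I = min (card A) (rank K A + 1)" "nullity K I \<le> 1"
    using assms by (rule obtain_subset_nullity_le)
  then show "min (card A) (rank K A + 1) \<le> rank (lift K) A"
    using assms by (metis L.card_le_rank indep_lift order_trans)
qed

lemma nullity_lift:
  assumes "A \<subseteq> ground K"
  shows "nullity (lift K) A = nullity K A - 1"
proof -
  have "rank K A \<le> card A" using assms by (intro rank_le_card finite_subset[OF _ finite_ground])
  then show ?thesis unfolding nullity_def rank_lift[OF assms] by (simp add: min_def)
qed

end

lemma ground_lift_iter [simp]: "ground ((lift ^^ i) K) = ground K"
  by (induction i) simp_all

lemma nullity_lift_iter:
  assumes "indep_system K" "A \<subseteq> ground K"
  shows "nullity ((lift ^^ i) K) A = nullity K A - i"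
proof (induction i)
  case (Suc i)
  have "indep_system ((lift ^^ i) K)"
    using indep_system.indep_system_lift assms(1) by (rule indep_system_funpow)
  then show ?case using Suc.IH assms(2) by (simp add: indep_system.nullity_lift)
qed simp

context indep_system
begin

lemma indep_system_trunc: "indep_system (trunc K)"
proof
  fix A B assume "indep (trunc K) A" "B \<subseteq> A"
  then show "indep (trunc K) B"
    using indep_subset finite_indep card_mono[of A B] by (auto simp: indep_trunc)
qed (auto simp: indep_trunc finite_ground indep_empty indep_subset_ground)

lemma mrank_trunc: "mrank (trunc K) = mrank K - 1"
proof (rule antisym)
  interpret T: indep_system "trunc K" by (rule indep_system_trunc)
  obtain B where "indep (trunc K) B" "card B = mrank (trunc K)"
    unfolding mrank_def by (rule T.obtain_rank_indep)
  then show "mrank (trunc K) \<le> mrank K - 1" by (simp add: indep_trunc)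
next
  interpret T: indep_system "trunc K" by (rule indep_system_trunc)
  obtain B where "B \<subseteq> ground K" "indep K B" "card B = mrank K - 1"
    by (rule obtain_indep_card[of "mrank K - 1" "ground K"]) (simp_all add: mrank_def)
  then show "mrank K - 1 \<le> mrank (trunc K)"
    unfolding mrank_def[of "trunc K"] using T.card_le_rank[of B] by (simp add: indep_trunc)
qed

end

lemma ground_trunc_iter [simp]: "ground ((trunc ^^ j) K) = ground K"
  by (induction j) simp_all

lemma mrank_trunc_iter: "indep_system K \<Longrightarrow> mrank ((trunc ^^ j) K) = mrank K - j"
proof (induction j)
  case (Suc j)
  have "indep_system ((trunc ^^ j) K)"
    using indep_system.indep_system_trunc Suc.prems by (rule indep_system_funpow)
  then show ?case using Suc by (simp add: indep_system.mrank_trunc)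
qed simp

lemma indep_trunc_iter:
  assumes "indep_system K"
  shows "indep ((trunc ^^ j) K) A \<longleftrightarrow> indep K A \<and> card A \<le> mrank K - j"
proof (induction j)
  case 0
  show ?case using indep_system.card_le_rank[OF assms, of A "ground K"]
    by (auto simp: mrank_def dest: indep_system.indep_subset_ground[OF assms])
qed (auto simp: indep_trunc mrank_trunc_iter[OF assms])

section \<open>Contraction\<close>

lemma ground_contract [simp]: "ground (contract M X) = ground M - X"
  by (simp add: contract_def)

lemma indep_contract:
  "indep (contract M X) A \<longleftrightarrow> A \<subseteq> ground M - X \<and> rank M (A \<union> X) = card A + rank M X"
  by (simp add: contract_def)

lemma (in indep_system) indep_system_contract: "indep_system (contract K X)"
proof
  fix A B assume A: "indep (contract K X) A" and "B \<subseteq> A"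
  then have fA: "finite A"
    using finite_subset[OF _ finite_ground] by (auto simp: indep_contract)
  have fB: "finite B" using fA \<open>B \<subseteq> A\<close> finite_subset by blast
  have "A \<union> X = (A - B) \<union> (B \<union> X)" using \<open>B \<subseteq> A\<close> by blast
  then have "rank K (A \<union> X) \<le> card (A - B) + rank K (B \<union> X)"
    using rank_Un_le[of "A - B" "B \<union> X"] fA by simp
  moreover have "card A = card (A - B) + card B"
    using card_Diff_subset[OF fB \<open>B \<subseteq> A\<close>] card_mono[OF fA \<open>B \<subseteq> A\<close>] by simp
  moreover have "rank K (B \<union> X) \<le> card B + rank K X" using fB by (rule rank_Un_le)
  ultimately show "indep (contract K X) B"
    using A \<open>B \<subseteq> A\<close> unfolding indep_contract by auto
qed (auto simp: indep_contract finite_ground)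

lemma rank_contract:
  assumes "matroid M" "Z \<subseteq> ground M - X"
  shows "rank (contract M X) Z = rank M (Z \<union> X) - rank M X"
proof -
  interpret indep_system M using assms(1) by (rule indep_system_matroid)
  interpret C: indep_system "contract M X" by (rule indep_system_contract)
  show ?thesis
  proof (rule antisym)
    obtain B where "B \<subseteq> Z" "indep (contract M X) B" "card B = rank (contract M X) Z"
      by (rule C.obtain_rank_indep)
    moreover have "rank M (B \<union> X) \<le> rank M (Z \<union> X)" using \<open>B \<subseteq> Z\<close> by (intro rank_mono) blast
    ultimately show "rank (contract M X) Z \<le> rank M (Z \<union> X) - rank M X"
      unfolding indep_contract by linarith
  next
    txt \<open>Extend a basis of \<open>X\<close> to one of \<open>Z \<union> X\<close>; its part outside \<open>X\<close> is independent in \<open>M/X\<close>.\<close>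
    obtain BX where BX: "BX \<subseteq> X" "indep M BX" "card BX = rank M X"
      by (rule obtain_rank_indep)
    then obtain J where J: "BX \<subseteq> J" "J \<subseteq> Z \<union> X" "indep M J" "card J = rank M (Z \<union> X)"
      using matroid_augment_to_rank[OF assms(1), of BX "Z \<union> X"] by blast
    have "card (J \<inter> X) \<le> rank M X"
      using indep_subset[OF J(3)] by (intro card_le_rank) auto
    then have JX: "J \<inter> X = BX"
      using BX(1) J(1) finite_indep[OF J(3)] by (metis BX(3) Int_subset_iff card_seteq finite_Int subset_refl)
    define B where "B = J - X"
    have "finite B" using finite_indep[OF J(3)] by (simp add: B_def)
    have cJ: "card J = card B + rank M X"
      using card_Int_Diff[OF finite_indep[OF J(3)], of X] JX BX(3) unfolding B_def by simp
    have "card J \<le> rank M (B \<union> X)" using J(3) by (rule card_le_rank) (auto simp: B_def)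
    then have "indep (contract M X) B"
      using rank_Un_le[OF \<open>finite B\<close>, of X] cJ J(2) assms(2) unfolding indep_contract B_def by auto
    then have "card B \<le> rank (contract M X) Z"
      using J(2) by (intro C.card_le_rank) (auto simp: B_def)
    then show "rank M (Z \<union> X) - rank M X \<le> rank (contract M X) Z" using cJ J(4) by linarith
  qed
qed

lemma mrank_contract:
  assumes "matroid M" "X \<subseteq> ground M"
  shows "mrank (contract M X) = mrank M - rank M X"
  using rank_contract[OF assms(1), of "ground M - X" X] assms(2)
  by (simp add: mrank_def Un_absorb2)

section \<open>Free product\<close>

lemma matroid_eqI:
  fixes M N :: "'a matroid"
  assumes "ground M = ground N" "\<And>A. indep M A \<longleftrightarrow> indep N A"
  shows "M = N"
  using assms by (intro matroid.equality ext) simp_all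

lemma ground_free_product [simp]: "ground (free_product M N) = ground M \<union> ground N"
  by (simp add: free_product_def)

lemma indep_free_product:
  "indep (free_product M N) A \<longleftrightarrow> A \<subseteq> ground M \<union> ground N \<and> indep M (A \<inter> ground M) \<and>
     nullity N (A \<inter> ground N) \<le> corank M (A \<inter> ground M)"
  by (auto simp: free_product_def)

lemma indep_system_free_product:
  assumes M: "indep_system M" and N: "indep_system N"
  shows "indep_system (free_product M N)"
proof -
  interpret M: indep_system M by (rule M)
  interpret N: indep_system N by (rule N)
  show ?thesis
  proof
    fix A B assume A: "indep (free_product M N) A" and "B \<subseteq> A"
    then have "nullity N (B \<inter> ground N) \<le> nullity N (A \<inter> ground N)"
      by (intro N.nullity_mono) auto
    moreover have "rank M (B \<inter> ground M) \<le> rank M (A \<inter> ground M)"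
      using \<open>B \<subseteq> A\<close> by (intro M.rank_mono) auto
    ultimately show "indep (free_product M N) B"
      using A \<open>B \<subseteq> A\<close> M.indep_subset[of "A \<inter> ground M" "B \<inter> ground M"]
      unfolding indep_free_product corank_def by auto
  qed (auto simp: indep_free_product nullity_def M.finite_ground N.finite_ground M.indep_empty)
qed

lemma card_indep_free_product_le:
  assumes M: "indep_system M" and N: "indep_system N" and disj: "ground M \<inter> ground N = {}"
    and X: "X \<subseteq> ground M" and Y: "Y \<subseteq> ground N"
    and I: "I \<subseteq> X \<union> Y" "indep (free_product M N) I"
  shows "card I \<le> min (rank M X + card Y) (mrank M + rank N Y)"
proof -
  interpret M: indep_system M by (rule M)
  interpret N: indep_system N by (rule N)
  define IS IT where "IS = I \<inter> ground M" and "IT = I \<inter> ground N"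
  have "I = IS \<union> IT" "IS \<inter> IT = {}" "IS \<subseteq> X" "IT \<subseteq> Y"
    using I disj X Y unfolding IS_def IT_def indep_free_product by blast+
  moreover have "finite IS" "finite IT"
    using M.finite_ground N.finite_ground unfolding IS_def IT_def by simp_all
  ultimately have "card I = card IS + card IT" by (simp add: card_Un_disjoint)
  moreover have "indep M IS" "card IT - rank N IT \<le> mrank M - rank M IS"
    using I(2) unfolding indep_free_product IS_def IT_def nullity_def corank_def by simp_all
  moreover have "rank M IS = card IS" using \<open>finite IS\<close> \<open>indep M IS\<close> by (rule rank_indep)
  moreover have "rank M IS \<le> rank M X" "rank N IT \<le> rank N Y" "card IT \<le> card Y"
    "rank M X \<le> mrank M" "rank N IT \<le> card IT"
    using \<open>IS \<subseteq> X\<close> \<open>IT \<subseteq> Y\<close> \<open>finite IT\<close> Y N.finite_ground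
    by (simp_all add: M.rank_mono N.rank_mono card_mono M.rank_le_mrank N.rank_le_card finite_subset)
  ultimately show ?thesis by linarith
qed

lemma rank_free_product:
  assumes M: "indep_system M" and N: "indep_system N" and disj: "ground M \<inter> ground N = {}"
    and X: "X \<subseteq> ground M" and Y: "Y \<subseteq> ground N"
  shows "rank (free_product M N) (X \<union> Y) = min (rank M X + card Y) (mrank M + rank N Y)"
proof (rule antisym)
  interpret M: indep_system M by (rule M)
  interpret N: indep_system N by (rule N)
  interpret P: indep_system "free_product M N" using M N by (rule indep_system_free_product)
  obtain I where I: "I \<subseteq> X \<union> Y" "indep (free_product M N) I"
    "card I = rank (free_product M N) (X \<union> Y)"
    by (rule P.obtain_rank_indep)
  then show "rank (free_product M N) (X \<union> Y) \<le> min (rank M X + card Y) (mrank M + rank N Y)"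
    using card_indep_free_product_le[OF assms I(1,2)] by simp
next
  interpret M: indep_system M by (rule M)
  interpret N: indep_system N by (rule N)
  interpret P: indep_system "free_product M N" using M N by (rule indep_system_free_product)
  have fY: "finite Y" using Y N.finite_ground finite_subset by blast
  obtain BX where BX: "BX \<subseteq> X" "indep M BX" "card BX = rank M X"
    by (rule M.obtain_rank_indep)
  obtain IY where IY: "IY \<subseteq> Y" "card IY = min (card Y) (rank N Y + (mrank M - rank M X))"
    "nullity N IY \<le> mrank M - rank M X"
    using Y by (rule N.obtain_subset_nullity_le)
  have "BX \<inter> ground M = BX" "IY \<inter> ground M = {}" "BX \<inter> ground N = {}" "IY \<inter> ground N = IY"
    using BX(1) IY(1) X Y disj by blast+
  moreover have "rank M BX = card BX" using M.finite_indep[OF BX(2)] BX(2) by (rule rank_indep)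
  ultimately have "indep (free_product M N) (BX \<union> IY)"
    using BX IY X Y unfolding indep_free_product corank_def by (auto simp: Int_Un_distrib2)
  moreover have "BX \<union> IY \<subseteq> X \<union> Y" using BX(1) IY(1) by blast
  ultimately have "card (BX \<union> IY) \<le> rank (free_product M N) (X \<union> Y)"
    by (rule P.card_le_rank)
  moreover have "BX \<inter> IY = {}" using BX(1) IY(1) X Y disj by blast
  then have "card (BX \<union> IY) = card BX + card IY"
    using IY(1) fY M.finite_indep[OF BX(2)] by (intro card_Un_disjoint) (auto intro: finite_subset)
  moreover have "rank M X \<le> mrank M" by (rule M.rank_le_mrank)
  ultimately show "min (rank M X + card Y) (mrank M + rank N Y) \<le> rank (free_product M N) (X \<union> Y)"
    using BX(3) IY(2) by linarith
qed

lemma restrict_free_product: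
  assumes M: "indep_system M" and N: "indep_system N" and U: "U \<subseteq> ground M \<union> ground N"
  shows "restrict (free_product M N) U =
           free_product (restrict M (U \<inter> ground M))
             ((lift ^^ corank M (U \<inter> ground M)) (restrict N (U \<inter> ground N)))"
    (is "_ = free_product ?M' ?L")
proof (rule matroid_eqI)
  show "ground (restrict (free_product M N) U) = ground (free_product ?M' ?L)"
    using U by auto
next
  fix I
  show "indep (restrict (free_product M N) U) I \<longleftrightarrow> indep (free_product ?M' ?L) I"
  proof (cases "I \<subseteq> U")
    case False
    then show ?thesis using U by (auto simp: indep_restrict indep_free_product)
  next
    case True
    have IS: "I \<inter> (U \<inter> ground M) = I \<inter> ground M" and IT: "I \<inter> (U \<inter> ground N) = I \<inter> ground N"
      and IU: "I \<inter> ground M \<subseteq> U \<inter> ground M"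
      using True by blast+
    have "indep_system (restrict N (U \<inter> ground N))"
      using N by (rule indep_system.indep_system_restrict) blast
    then have "nullity ?L (I \<inter> ground N) =
        nullity (restrict N (U \<inter> ground N)) (I \<inter> ground N) - corank M (U \<inter> ground M)"
      by (rule nullity_lift_iter) (use True in auto)
    also have "\<dots> = nullity N (I \<inter> ground N) - corank M (U \<inter> ground M)"
      using True by (subst nullity_restrict) auto
    finally have "nullity ?L (I \<inter> ground N) = nullity N (I \<inter> ground N) - corank M (U \<inter> ground M)" .
    moreover have "corank ?M' (I \<inter> ground M) = rank M (U \<inter> ground M) - rank M (I \<inter> ground M)"
      using IU by (simp add: corank_def mrank_restrict rank_restrict)
    moreover have "rank M (I \<inter> ground M) \<le> rank M (U \<inter> ground M)"
      using IU by (rule indep_system.rank_mono[OF M])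
    moreover have "rank M (U \<inter> ground M) \<le> mrank M" by (rule indep_system.rank_le_mrank[OF M])
    ultimately have "nullity N (I \<inter> ground N) \<le> corank M (I \<inter> ground M) \<longleftrightarrow>
        nullity ?L (I \<inter> ground N) \<le> corank ?M' (I \<inter> ground M)"
      unfolding corank_def by arith
    then show ?thesis
      using True U by (auto simp: indep_free_product indep_restrict IS IT)
  qed
qed

lemma indep_contract_free_product_iff:
  assumes M: "indep_system M" and N: "indep_system N" and disj: "ground M \<inter> ground N = {}"
    and X: "X \<subseteq> ground M" and Y: "Y \<subseteq> ground N"
    and AS: "AS \<subseteq> ground M - X" and AT: "AT \<subseteq> ground N - Y"
  shows "indep (contract (free_product M N) (X \<union> Y)) (AS \<union> AT) \<longleftrightarrow>
    min (rank M (AS \<union> X) + (card AT + card Y)) (mrank M + rank N (AT \<union> Y)) =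
    card AS + card AT + min (rank M X + card Y) (mrank M + rank N Y)"
proof -
  have fAS: "finite AS" and fAT: "finite AT" and fY: "finite Y"
    using AS AT Y indep_system.finite_ground[OF M] indep_system.finite_ground[OF N]
    by (auto intro: finite_subset)
  have AU: "AS \<union> AT \<union> (X \<union> Y) = (AS \<union> X) \<union> (AT \<union> Y)" by blast
  have "card (AS \<union> AT) = card AS + card AT"
    using AS AT disj fAS fAT by (intro card_Un_disjoint) auto
  moreover have "card (AT \<union> Y) = card AT + card Y"
    using AT fAT fY by (intro card_Un_disjoint) auto
  moreover have "rank (free_product M N) (AS \<union> AT \<union> (X \<union> Y)) =
      min (rank M (AS \<union> X) + card (AT \<union> Y)) (mrank M + rank N (AT \<union> Y))"
    unfolding AU using AS AT X Y by (intro rank_free_product[OF M N disj]) auto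
  moreover have "AS \<union> AT \<subseteq> ground M \<union> ground N - (X \<union> Y)"
    using AS AT X Y disj by blast
  ultimately show ?thesis
    by (simp add: indep_contract rank_free_product[OF M N disj X Y])
qed

lemma indep_free_product_trunc_contract_iff:
  assumes M: "matroid M" and N: "matroid N" and disj: "ground M \<inter> ground N = {}"
    and X: "X \<subseteq> ground M" and Y: "Y \<subseteq> ground N"
    and AS: "AS \<subseteq> ground M - X" and AT: "AT \<subseteq> ground N - Y"
  shows "indep (free_product ((trunc ^^ nullity N Y) (contract M X)) (contract N Y)) (AS \<union> AT) \<longleftrightarrow>
    rank M (AS \<union> X) = card AS + rank M X \<and> card AS \<le> mrank M - rank M X - nullity N Y \<and>
    card AT - (rank N (AT \<union> Y) - rank N Y) \<le> mrank M - rank M X - nullity N Y - card AS"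
proof -
  let ?T = "(trunc ^^ nullity N Y) (contract M X)"
  interpret M: indep_system M using M by (rule indep_system_matroid)
  have T: "indep_system (contract M X)" by (rule M.indep_system_contract)
  have fAS: "finite AS" using AS M.finite_ground finite_subset by blast
  have "indep ?T AS \<longleftrightarrow> rank M (AS \<union> X) = card AS + rank M X \<and>
      card AS \<le> mrank M - rank M X - nullity N Y"
    using AS by (simp add: indep_trunc_iter[OF T] indep_contract mrank_contract[OF M X])
  moreover have "corank ?T AS = mrank M - rank M X - nullity N Y - card AS" if "indep ?T AS"
    using rank_indep[OF fAS that] by (simp add: corank_def mrank_trunc_iter[OF T] mrank_contract[OF M X])
  moreover have "nullity (contract N Y) AT = card AT - (rank N (AT \<union> Y) - rank N Y)"
    using rank_contract[OF N AT] by (simp add: nullity_def)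
  moreover have "(AS \<union> AT) \<inter> (ground M - X) = AS" "(AS \<union> AT) \<inter> (ground N - Y) = AT"
    using AS AT disj by blast+
  ultimately show ?thesis using AS AT by (auto simp: indep_free_product)
qed

text \<open>With \<open>U = X \<union> Y\<close> and \<open>A = A\<^sub>S \<union> A\<^sub>T\<close> split along \<open>S\<close> and \<open>T\<close>, read \<open>R = \<rho>(M)\<close>,
  \<open>a = \<rho>\<^sub>M(X)\<close>, \<open>a' = \<rho>\<^sub>M(A\<^sub>S \<union> X)\<close>, \<open>n\<^sub>0 = \<rho>\<^sub>N(Y)\<close>, \<open>n\<^sub>1 = \<rho>\<^sub>N(A\<^sub>T \<union> Y)\<close>, \<open>s = |A\<^sub>S|\<close>,
  \<open>t = |A\<^sub>T|\<close> and \<open>y = |Y|\<close>: the left side is independence of \<open>A\<close> in \<open>P/U\<close>, the right side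
  its independence in \<open>T\<^sup>j(M/X) \<box> N/Y\<close>.\<close>
lemma contract_free_product_arith:
  fixes a a' s t y n\<^sub>0 n\<^sub>1 R :: nat
  assumes "a \<le> a'" "a' \<le> s + a" "a' \<le> R" "n\<^sub>0 \<le> n\<^sub>1" "n\<^sub>1 \<le> t + n\<^sub>0" "n\<^sub>0 \<le> y"
  shows "min (a' + (t + y)) (R + n\<^sub>1) = s + t + min (a + y) (R + n\<^sub>0) \<longleftrightarrow>
    a' = s + a \<and> s \<le> R - a - (y - n\<^sub>0) \<and> t - (n\<^sub>1 - n\<^sub>0) \<le> R - a - (y - n\<^sub>0) - s"
  using assms by (simp add: min_def) arith

lemma indep_contract_free_product_iff_indep_free_product:
  assumes M: "matroid M" and N: "matroid N" and disj: "ground M \<inter> ground N = {}"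
    and X: "X \<subseteq> ground M" and Y: "Y \<subseteq> ground N"
    and AS: "AS \<subseteq> ground M - X" and AT: "AT \<subseteq> ground N - Y"
  shows "indep (contract (free_product M N) (X \<union> Y)) (AS \<union> AT) \<longleftrightarrow>
    indep (free_product ((trunc ^^ nullity N Y) (contract M X)) (contract N Y)) (AS \<union> AT)"
proof -
  interpret M: indep_system M using M by (rule indep_system_matroid)
  interpret N: indep_system N using N by (rule indep_system_matroid)
  have "rank M X \<le> rank M (AS \<union> X)" "rank M (AS \<union> X) \<le> card AS + rank M X"
    "rank M (AS \<union> X) \<le> mrank M"
    using AS M.finite_ground by (auto intro: M.rank_mono M.rank_Un_le M.rank_le_mrank finite_subset)
  moreover have "rank N Y \<le> rank N (AT \<union> Y)" "rank N (AT \<union> Y) \<le> card AT + rank N Y"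
    "rank N Y \<le> card Y"
    using AT Y N.finite_ground by (auto intro: N.rank_mono N.rank_Un_le N.rank_le_card finite_subset)
  ultimately show ?thesis
    using indep_contract_free_product_iff[OF M.indep_system_axioms N.indep_system_axioms disj X Y AS AT]
      indep_free_product_trunc_contract_iff[OF M N disj X Y AS AT]
    unfolding nullity_def by (simp add: contract_free_product_arith)
qed

lemma contract_free_product:
  assumes M: "matroid M" and N: "matroid N" and disj: "ground M \<inter> ground N = {}"
    and U: "U \<subseteq> ground M \<union> ground N"
  shows "contract (free_product M N) U =
           free_product ((trunc ^^ nullity N (U \<inter> ground N)) (contract M (U \<inter> ground M)))
             (contract N (U \<inter> ground N))"
    (is "_ = free_product ?T ?N'")
proof (rule matroid_eqI)
  show "ground (contract (free_product M N) U) = ground (free_product ?T ?N')"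
    using U by auto
next
  fix A
  show "indep (contract (free_product M N) U) A \<longleftrightarrow> indep (free_product ?T ?N') A"
  proof (cases "A \<subseteq> ground M \<union> ground N - U")
    case False
    then show ?thesis using U by (auto simp: indep_contract indep_free_product)
  next
    case True
    have "U \<inter> ground M \<union> U \<inter> ground N = U" "A \<inter> ground M \<union> A \<inter> ground N = A"
      using U True by blast+
    then show ?thesis
      using indep_contract_free_product_iff_indep_free_product[OF M N disj,
          of "U \<inter> ground M" "U \<inter> ground N" "A \<inter> ground M" "A \<inter> ground N"] True
      by auto
  qed
qed

theorem proposition5p2:
  fixes M N :: "'a matroid" and U :: "'a set"
  assumes "matroid M" and "matroid N"
    and "ground M \<inter> ground N = {}"
    and "U \<subseteq> ground M \<union> ground N"
  shows "restrict (free_product M N) U =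
           free_product (restrict M (U \<inter> ground M))
             ((lift ^^ corank M (U \<inter> ground M)) (restrict N (U \<inter> ground N)))
       \<and> contract (free_product M N) U =
           free_product ((trunc ^^ nullity N (U \<inter> ground N)) (contract M (U \<inter> ground M)))
             (contract N (U \<inter> ground N))"
  using restrict_free_product[OF indep_system_matroid[OF assms(1)] indep_system_matroid[OF assms(2)] assms(4)]
    contract_free_product[OF assms]
  by (rule conjI)

end
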